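(* Let $J$ be the ideal of a non-trivial, non-minimal tetrahedral curve $(a_1,\dots,a_6)$, and let $J=L\cdot I+(F)$ be the basic double link obtained by reducing $J$ at a facet of maximal weight (with $L$, $F$ and $I$ as prescribed by that reduction). Set $e=\deg F$. Then the mapping cone resolution of $J$ obtained from the exact sequence $$0\to R(-e-1)\to I(-1)\oplus R(-e)\to J\to 0$$ (first map $C\mapsto (FC,LC)$, second map $(A,B)\mapsto LA-FB$), using the minimal free resolution of $I$, is a minimal free resolution if and only if $J$ is not, up to a permutation of the variables, the ideal of a curve $(0,r,r,r,r,0)$.
   Context: Let $k$ be a field, $R=k[a,b,c,d]$. The tetrahedral curve $(a_1,\dots,a_6)$ has ideal $(a,b)^{a_1}\cap(a,c)^{a_2}\cap(a,d)^{a_3}\cap(b,c)^{a_4}\cap(b,d)^{a_5}\cap(c,d)^{a_6}$; permuting variables permutes entries. Facets $\{a_1,a_2,a_3\},\{a_1,a_4,a_5\},\{a_2,a_4,a_6\},\{a_3,a_5,a_6\}$ with weight the sum of entries. With $a_i'=\max\{0,a_i-1\}$, the reductions: (A) if $a_1+a_2\ge a_4$, $a_1+a_3\ge a_5$, $a_2+a_3\ge a_6$: $L=a$, $F=b^{a_1}c^{a_2}d^{a_3}$, $I$ the ideal of $(a_1',a_2',a_3',a_4,a_5,a_6)$; (B) if $a_1+a_4\ge a_2$, $a_1+a_5\ge a_3$, $a_4+a_5\ge a_6$: $L=b$, $F=a^{a_1}c^{a_4}d^{a_5}$, $I$ of $(a_1',a_2,a_3,a_4',a_5',a_6)$; (C)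 if $a_2+a_4\ge a_1$, $a_2+a_6\ge a_3$, $a_4+a_6\ge a_5$: $L=c$, $F=a^{a_2}b^{a_4}d^{a_6}$, $I$ of $(a_1,a_2',a_3,a_4',a_5,a_6')$; (D) if $a_3+a_5\ge a_1$, $a_3+a_6\ge a_2$, $a_5+a_6\ge a_4$: $L=d$, $F=a^{a_3}b^{a_5}c^{a_6}$, $I$ of $(a_1,a_2,a_3',a_4,a_5',a_6')$; in each case $J=L\cdot I+(F)$. These are reductions at the facets $\{a_1,a_2,a_3\},\{a_1,a_4,a_5\},\{a_2,a_4,a_6\},\{a_3,a_5,a_6\}$ respectively. A non-arithmetically Cohen–Macaulay curve is minimal if no reduction applies; if a non-trivial curve is not minimal, a reduction at a facet of maximal weight exists. *)

theory Defs
  imports "HOL-Library.Poly_Mapping" "HOL-Combinatorics.Permutations"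
begin

text \<open>Polynomials in the variables x_0 = a, x_1 = b, x_2 = c, x_3 = d over a field k,
  represented as finitely supported maps from monomials (exponent vectors) to coefficients.\<close>

type_synonym 'k mpoly4 = "(nat \<Rightarrow>\<^sub>0 nat) \<Rightarrow>\<^sub>0 'k"

definition var :: "nat \<Rightarrow> 'k::field mpoly4" where
  "var i = Poly_Mapping.single (Poly_Mapping.single i 1) 1"

definition mdeg :: "(nat \<Rightarrow>\<^sub>0 nat) \<Rightarrow> nat" where
  "mdeg m = (\<Sum>i\<in>Poly_Mapping.keys m. Poly_Mapping.lookup m i)"

text \<open>p is homogeneous of degree d (the zero polynomial is homogeneous of every degree)\<close>
definition homog :: "'k::field mpoly4 \<Rightarrow> int \<Rightarrow> bool" where
  "homog p d = (p = 0 \<or> (\<forall>m\<in>Poly_Mapping.keys p. int (mdeg m) = d))"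

definition tdeg :: "'k::field mpoly4 \<Rightarrow> nat" where
  "tdeg p = (if p = 0 then 0 else Max (mdeg ` Poly_Mapping.keys p))"

text \<open>membership in the homogeneous maximal ideal (a,b,c,d): zero constant term\<close>
definition in_max :: "'k::field mpoly4 \<Rightarrow> bool" where
  "in_max p = (Poly_Mapping.lookup p 0 = 0)"

definition ideal_gen :: "'k::field mpoly4 set \<Rightarrow> 'k mpoly4 set" where
  "ideal_gen S = {\<Sum>i<n. c i * s i | (n::nat) c s. \<forall>i<n. s i \<in> S}"

definition pow_ideal :: "nat \<Rightarrow> nat \<Rightarrow> nat \<Rightarrow> 'k::field mpoly4 set" where
  "pow_ideal i j n = ideal_gen {var i ^ l * var j ^ (n - l) | l. l \<le> n}"

text \<open>Position (0-based) of the entry of the 6-tuple belonging to the pair of variables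
  {x_i, x_j}: (a,b)->a_1, (a,c)->a_2, (a,d)->a_3, (b,c)->a_4, (b,d)->a_5, (c,d)->a_6.\<close>
definition pidx :: "nat \<Rightarrow> nat \<Rightarrow> nat" where
  "pidx i j = (let p = min i j; q = max i j in
     if p = 0 then q - 1 else if p = 1 then q + 1 else 5)"

text \<open>The tetrahedral curve ideal of (a_1,...,a_6) (list of length 6, entry a_k at index k-1),
  after applying the permutation sigma to the variables (x_i is replaced by x_(sigma i)).
  With sigma = id this is (a,b)^a1 \<inter> (a,c)^a2 \<inter> (a,d)^a3 \<inter> (b,c)^a4 \<inter> (b,d)^a5 \<inter> (c,d)^a6.\<close>
definition perm_tet_ideal :: "(nat \<Rightarrow> nat) \<Rightarrow> nat list \<Rightarrow> 'k::field mpoly4 set" where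
  "perm_tet_ideal \<sigma> a =
     (\<Inter>(i, j) \<in> {(i, j). i < j \<and> j < 4}. pow_ideal (\<sigma> i) (\<sigma> j) (a ! pidx i j))"

definition tet_ideal :: "nat list \<Rightarrow> 'k::field mpoly4 set" where
  "tet_ideal a = perm_tet_ideal id a"

definition trivial_curve :: "nat list \<Rightarrow> bool" where
  "trivial_curve a = (\<forall>k<6. a ! k = 0)"

text \<open>Facets 0,1,2,3 = reductions (A),(B),(C),(D), i.e. facets {a1,a2,a3}, {a1,a4,a5},
  {a2,a4,a6}, {a3,a5,a6}.\<close>
definition facet_weight :: "nat \<Rightarrow> nat list \<Rightarrow> nat" where
  "facet_weight X a =
    (if X = 0 then a!0 + a!1 + a!2
     else if X = 1 then a!0 + a!3 + a!4
     else if X = 2 then a!1 + a!3 + a!5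
     else a!2 + a!4 + a!5)"

definition reduction_applies :: "nat \<Rightarrow> nat list \<Rightarrow> bool" where
  "reduction_applies X a =
    (if X = 0 then a!0 + a!1 \<ge> a!3 \<and> a!0 + a!2 \<ge> a!4 \<and> a!1 + a!2 \<ge> a!5
     else if X = 1 then a!0 + a!3 \<ge> a!1 \<and> a!0 + a!4 \<ge> a!2 \<and> a!3 + a!4 \<ge> a!5
     else if X = 2 then a!1 + a!3 \<ge> a!0 \<and> a!1 + a!5 \<ge> a!2 \<and> a!3 + a!5 \<ge> a!4
     else if X = 3 then a!2 + a!4 \<ge> a!0 \<and> a!2 + a!5 \<ge> a!1 \<and> a!4 + a!5 \<ge> a!3
     else False)"

definition red_L :: "nat \<Rightarrow> 'k::field mpoly4" where
  "red_L X = var X"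

definition red_F :: "nat \<Rightarrow> nat list \<Rightarrow> 'k::field mpoly4" where
  "red_F X a =
    (if X = 0 then var 1 ^ a!0 * var 2 ^ a!1 * var 3 ^ a!2
     else if X = 1 then var 0 ^ a!0 * var 2 ^ a!3 * var 3 ^ a!4
     else if X = 2 then var 0 ^ a!1 * var 1 ^ a!3 * var 3 ^ a!5
     else var 0 ^ a!2 * var 1 ^ a!4 * var 2 ^ a!5)"

text \<open>the tuple of the curve whose ideal is I (nat subtraction is max 0 (x - 1))\<close>
definition red_tuple :: "nat \<Rightarrow> nat list \<Rightarrow> nat list" where
  "red_tuple X a =
    (if X = 0 then [a!0 - 1, a!1 - 1, a!2 - 1, a!3, a!4, a!5]
     else if X = 1 then [a!0 - 1, a!1, a!2, a!3 - 1, a!4 - 1, a!5]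
     else if X = 2 then [a!0, a!1 - 1, a!2, a!3 - 1, a!4, a!5 - 1]
     else [a!0, a!1, a!2 - 1, a!3, a!4 - 1, a!5 - 1])"

definition non_minimal :: "nat list \<Rightarrow> bool" where
  "non_minimal a = (\<exists>X<4. reduction_applies X a)"

text \<open>A graded free resolution of a homogeneous ideal I:
  0 -> F_N -> ... -> F_1 -> F_0 -> I -> 0, where F_i = (+)_{j < r i} R(- dg i j),
  r i = 0 for i > N, g j in I is the image of the j-th basis element of F_0, and
  M i k j is the (k,j) entry of the matrix of F_i -> F_(i-1) (i \<ge> 1), i.e. the
  coefficient of the k-th basis vector of F_(i-1) in the image of the j-th basis vector of F_i.\<close>
definition graded_free_res ::
  "'k::field mpoly4 set \<Rightarrow> nat \<Rightarrow> (nat \<Rightarrow> nat) \<Rightarrow> (nat \<Rightarrow> nat \<Rightarrow> int) \<Rightarrow>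
   (nat \<Rightarrow> 'k mpoly4) \<Rightarrow> (nat \<Rightarrow> nat \<Rightarrow> nat \<Rightarrow> 'k mpoly4) \<Rightarrow> bool" where
  "graded_free_res I N r dg g M \<longleftrightarrow>
     (\<forall>i>N. r i = 0) \<and>
     (\<forall>j<r 0. homog (g j) (dg 0 j)) \<and>
     (\<forall>i\<ge>1. \<forall>k<r (i - 1). \<forall>j<r i. homog (M i k j) (dg i j - dg (i - 1) k)) \<and>
     {\<Sum>j<r 0. g j * v j | v. True} = I \<and>
     (\<forall>v. (\<Sum>j<r 0. g j * v j) = 0 \<longleftrightarrow>
          (\<exists>w. \<forall>k<r 0. v k = (\<Sum>j<r 1. M 1 k j * w j))) \<and>
     (\<forall>i\<ge>1. \<forall>v. (\<forall>k<r (i - 1). (\<Sum>j<r i. M i k j * v j) = 0) \<longleftrightarrow>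
          (\<exists>w. \<forall>k<r i. v k = (\<Sum>j<r (Suc i). M (Suc i) k j * w j)))"

definition min_graded_free_res ::
  "'k::field mpoly4 set \<Rightarrow> nat \<Rightarrow> (nat \<Rightarrow> nat) \<Rightarrow> (nat \<Rightarrow> nat \<Rightarrow> int) \<Rightarrow>
   (nat \<Rightarrow> 'k mpoly4) \<Rightarrow> (nat \<Rightarrow> nat \<Rightarrow> nat \<Rightarrow> 'k mpoly4) \<Rightarrow> bool" where
  "min_graded_free_res I N r dg g M \<longleftrightarrow>
     graded_free_res I N r dg g M \<and>
     (\<forall>i\<ge>1. \<forall>k<r (i - 1). \<forall>j<r i. in_max (M i k j))"

text \<open>Given the resolution (N, r, dg, g, M) of I, the exact sequence
  0 -> R(-e-1) -> I(-1) (+) R(-e) -> J -> 0, C |-> (F C, L C), (A, B) |-> L A - F B,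
  and a lift h of the first map to F_0(-1) (+) R(-e) of the form (h, L) (so sum_j g_j h_j = F),
  the mapping cone is the complex
    C_0 = F_0(-1) (+) R(-e),  C_1 = F_1(-1) (+) R(-e-1),  C_i = F_i(-1) (i \<ge> 2),
  with augmentation (A,B) |-> L A - F B and differentials
    d_1 = [[M_1, h], [0, L]],  d_2 = [[M_2], [0]],  d_i = M_i (i \<ge> 3).
  (In C_0 and C_1 the extra summand is the last basis vector, of index r 0 resp. r 1.)\<close>
definition cone_len :: "nat \<Rightarrow> nat" where
  "cone_len N = max N 1"

definition cone_rank :: "(nat \<Rightarrow> nat) \<Rightarrow> nat \<Rightarrow> nat" where
  "cone_rank r i = (if i \<le> 1 then r i + 1 else r i)"

definition cone_deg :: "(nat \<Rightarrow> nat) \<Rightarrow> (nat \<Rightarrow> nat \<Rightarrow> int) \<Rightarrow> nat \<Rightarrow> nat \<Rightarrow> nat \<Rightarrow> int" where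
  "cone_deg r dg e i j =
     (if i = 0 \<and> j = r 0 then int e
      else if i = 1 \<and> j = r 1 then int e + 1
      else dg i j + 1)"

definition cone_aug :: "'k::field mpoly4 \<Rightarrow> 'k mpoly4 \<Rightarrow> (nat \<Rightarrow> nat) \<Rightarrow> (nat \<Rightarrow> 'k mpoly4)
    \<Rightarrow> nat \<Rightarrow> 'k mpoly4" where
  "cone_aug L F r g j = (if j = r 0 then - F else L * g j)"

definition cone_mat :: "'k::field mpoly4 \<Rightarrow> (nat \<Rightarrow> nat) \<Rightarrow> (nat \<Rightarrow> 'k mpoly4) \<Rightarrow>
    (nat \<Rightarrow> nat \<Rightarrow> nat \<Rightarrow> 'k mpoly4) \<Rightarrow> nat \<Rightarrow> nat \<Rightarrow> nat \<Rightarrow> 'k mpoly4" where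
  "cone_mat L r h M i k j =
     (if i = 1 then
        (if j = r 1 then (if k = r 0 then L else h k)
         else (if k = r 0 then 0 else M 1 k j))
      else if i = 2 then (if k = r 1 then 0 else M 2 k j)
      else M i k j)"

definition special_form :: "'k::field mpoly4 set \<Rightarrow> bool" where
  "special_form J = (\<exists>\<sigma> r. \<sigma> permutes {0..<4} \<and>
      J = perm_tet_ideal \<sigma> [0, r, r, r, r, 0])"

end

(*
  The curve ideal J is the monomial ideal spanned by the exponent vectors satisfying the six
  edge inequalities, and reducing at the facet opposite to x_X exhibits it as the basic double
  link J = x_X I + (F), where F is a monomial free of x_X. Since x_X and F are coprime, the
  mapping cone of the resolution of I is a graded free resolution of J. All entries of its
  differentials lie in the maximal ideal m except possibly those of the lift h of F along the
  generators of I, and h has entries in m iff F lies in m I, i.e. iff F / x_i still lies in I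
  for some variable x_i dividing F. For a facet of maximal weight this is a system of linear
  inequalities in the six entries, and it fails exactly for the curves (0,r,r,r,r,0) up to a
  permutation of the variables.
*)
theory Submission
  imports Defs
begin

section \<open>Monomial ideals\<close>

abbreviation "keys \<equiv> Poly_Mapping.keys"
abbreviation "lookup \<equiv> Poly_Mapping.lookup"

abbreviation monom :: "(nat \<Rightarrow>\<^sub>0 nat) \<Rightarrow> 'k::field mpoly4" where
  "monom m \<equiv> Poly_Mapping.single m 1"

abbreviation unit_exp :: "nat \<Rightarrow> nat \<Rightarrow>\<^sub>0 nat" where
  "unit_exp i \<equiv> Poly_Mapping.single i 1"

definition mon_dvd :: "(nat \<Rightarrow>\<^sub>0 nat) \<Rightarrow> (nat \<Rightarrow>\<^sub>0 nat) \<Rightarrow> bool" where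
  "mon_dvd m m' \<longleftrightarrow> (\<forall>k. lookup m k \<le> lookup m' k)"

lemma zero_in_ideal_gen: "0 \<in> ideal_gen S"
  unfolding ideal_gen_def by (rule CollectI, rule exI[of _ 0]) auto

lemma generator_in_ideal_gen: "s \<in> S \<Longrightarrow> s \<in> ideal_gen S"
  unfolding ideal_gen_def
  by (rule CollectI, rule exI[of _ 1], rule exI[of _ "\<lambda>_. 1"], rule exI[of _ "\<lambda>_. s"]) auto

lemma ideal_gen_mult: "x \<in> ideal_gen S \<Longrightarrow> c * x \<in> ideal_gen S"
proof -
  assume "x \<in> ideal_gen S"
  then obtain n :: nat and d s where x: "x = (\<Sum>i<n. d i * s i)" "\<forall>i<n. s i \<in> S"
    unfolding ideal_gen_def by blast
  have "c * x = (\<Sum>i<n. (c * d i) * s i)"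
    unfolding x sum_distrib_left by (simp add: mult.assoc)
  with x(2) show ?thesis
    unfolding ideal_gen_def by (intro CollectI exI[of _ n] exI[of _ "\<lambda>i. c * d i"] exI[of _ s]) simp
qed

lemma ideal_gen_add: "x \<in> ideal_gen S \<Longrightarrow> y \<in> ideal_gen S \<Longrightarrow> x + y \<in> ideal_gen S"
proof -
  assume "x \<in> ideal_gen S" "y \<in> ideal_gen S"
  then obtain n m :: nat and d s d' s'
    where x: "x = (\<Sum>i<n. d i * s i)" "\<forall>i<n. s i \<in> S"
      and y: "y = (\<Sum>i<m. d' i * s' i)" "\<forall>i<m. s' i \<in> S"
    unfolding ideal_gen_def by blast
  define D where "D i = (if i < n then d i else d' (i - n))" for i
  define T where "T i = (if i < n then s i else s' (i - n))" for i
  have "(\<Sum>i<n + m. D i * T i) = (\<Sum>i<n. D i * T i) + (\<Sum>i<m. D (n + i) * T (n + i))"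
    by (induction m) (simp_all add: add_ac)
  also have "\<dots> = x + y"
    unfolding x y D_def T_def by simp
  finally have "x + y = (\<Sum>i<n + m. D i * T i)" by simp
  moreover have "\<forall>i<n + m. T i \<in> S"
    using x(2) y(2) unfolding T_def by auto
  ultimately show ?thesis
    unfolding ideal_gen_def by (intro CollectI exI[of _ "n + m"] exI[of _ D] exI[of _ T]) simp
qed

lemma ideal_gen_sum: "(\<And>a. a \<in> A \<Longrightarrow> f a \<in> ideal_gen S) \<Longrightarrow> sum f A \<in> ideal_gen S"
  by (induction A rule: infinite_finite_induct) (auto intro: zero_in_ideal_gen ideal_gen_add)

lemma poly_mapping_sum_single: "p = (\<Sum>m\<in>keys p. Poly_Mapping.single m (lookup p m))"
  by (rule poly_mapping_eqI) (simp add: lookup_sum lookup_single when_def sum.delta in_keys_iff)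

lemma mon_dvd_diff_add: "mon_dvd g m \<Longrightarrow> m - g + g = m"
  by (rule poly_mapping_eqI) (simp add: mon_dvd_def lookup_add lookup_minus)

lemma mon_dvd_add_right: "mon_dvd g (g + m)"
  by (simp add: mon_dvd_def lookup_add)

lemma mon_dvd_unit_exp: "mon_dvd (unit_exp i) m \<longleftrightarrow> 0 < lookup m i"
  by (auto simp: mon_dvd_def lookup_single when_def)

lemma single_eq_mult_monom:
  "mon_dvd g m \<Longrightarrow> Poly_Mapping.single m c = Poly_Mapping.single (m - g) (c::'k::field) * monom g"
  by (simp add: mult_single mon_dvd_diff_add)

lemma keys_monom_mult: "keys (monom g * p :: 'k::field mpoly4) \<subseteq> {g + m | m. m \<in> keys p}"
  using keys_mult[of "monom g" p] by auto

lemma monom_nonzero: "(monom m :: 'k::field mpoly4) \<noteq> 0"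
  by (metis lookup_single_eq lookup_zero zero_neq_one)

lemma var_power: "(var i :: 'k::field mpoly4) ^ l = monom (Poly_Mapping.single i l)"
  by (induction l) (simp_all add: var_def mult_single single_add[symmetric] add.commute)

lemma keys_sum_single:
  "keys (\<Sum>m\<in>K. Poly_Mapping.single (f m) (c m :: 'k::field)) \<subseteq> f ` K"
  using keys_sum[of "\<lambda>m. Poly_Mapping.single (f m) (c m)" K] by auto

lemma sum_single_factor:
  assumes "\<And>m. m \<in> K \<Longrightarrow> mon_dvd g m"
  shows "(\<Sum>m\<in>K. Poly_Mapping.single m (c m)) =
    monom g * (\<Sum>m\<in>K. Poly_Mapping.single (m - g) (c m) :: 'k::field mpoly4)"
  unfolding sum_distrib_left
  by (rule sum.cong) (simp_all add: single_eq_mult_monom[OF assms] mult.commute)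

definition up_closed :: "(nat \<Rightarrow>\<^sub>0 nat) set \<Rightarrow> bool" where
  "up_closed U \<longleftrightarrow> (\<forall>m m'. m \<in> U \<longrightarrow> mon_dvd m m' \<longrightarrow> m' \<in> U)"

definition mon_span :: "(nat \<Rightarrow>\<^sub>0 nat) set \<Rightarrow> 'k::field mpoly4 set" where
  "mon_span U = {p. keys p \<subseteq> U}"

lemma monom_in_mon_span [simp]: "monom m \<in> mon_span U \<longleftrightarrow> m \<in> U"
  by (simp add: mon_span_def)

lemma ideal_gen_monoms:
  assumes up: "up_closed U" and "G \<subseteq> U" and cover: "\<And>m. m \<in> U \<Longrightarrow> \<exists>g\<in>G. mon_dvd g m"
  shows "ideal_gen (monom ` G) = (mon_span U :: 'k::field mpoly4 set)"
proof
  show "ideal_gen (monom ` G) \<subseteq> (mon_span U :: 'k mpoly4 set)"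
  proof
    fix x :: "'k mpoly4"
    assume "x \<in> ideal_gen (monom ` G)"
    then obtain n :: nat and d s where x: "x = (\<Sum>i<n. d i * s i)" "\<forall>i<n. s i \<in> monom ` G"
      unfolding ideal_gen_def by blast
    have "keys (d i * s i) \<subseteq> U" if "i < n" for i
    proof -
      obtain g where "g \<in> G" "s i = monom g"
        using x(2) \<open>i < n\<close> by auto
      with \<open>G \<subseteq> U\<close> up show ?thesis
        using keys_monom_mult[of g "d i"] mon_dvd_add_right[of g]
        by (fastforce simp: up_closed_def mult.commute)
    qed
    then show "x \<in> mon_span U"
      using keys_sum[of "\<lambda>i. d i * s i" "{..<n}"] unfolding x(1) mon_span_def by blast
  qed
  show "(mon_span U :: 'k mpoly4 set) \<subseteq> ideal_gen (monom ` G)"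
  proof
    fix p :: "'k mpoly4"
    assume "p \<in> mon_span U"
    have "Poly_Mapping.single m (lookup p m) \<in> ideal_gen (monom ` G)" if "m \<in> keys p" for m
    proof -
      obtain g where "g \<in> G" "mon_dvd g m"
        using cover \<open>p \<in> mon_span U\<close> \<open>m \<in> keys p\<close> unfolding mon_span_def by blast
      then show ?thesis
        unfolding single_eq_mult_monom[OF \<open>mon_dvd g m\<close>]
        by (intro ideal_gen_mult generator_in_ideal_gen) simp
    qed
    then show "p \<in> ideal_gen (monom ` G)"
      by (subst poly_mapping_sum_single) (rule ideal_gen_sum)
  qed
qed

lemma pow_ideal_eq:
  assumes "i \<noteq> j"
  shows "(pow_ideal i j n :: 'k::field mpoly4 set) = mon_span {m. n \<le> lookup m i + lookup m j}"
proof -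
  have gens: "{var i ^ l * var j ^ (n - l) | l. l \<le> n} =
      (monom ` {Poly_Mapping.single i l + Poly_Mapping.single j (n - l) | l. l \<le> n} :: 'k mpoly4 set)"
    by (auto simp: var_power mult_single)
  show ?thesis
    unfolding pow_ideal_def gens
  proof (rule ideal_gen_monoms)
    show "up_closed {m. n \<le> lookup m i + lookup m j}"
      unfolding up_closed_def mon_dvd_def by (metis add_mono le_trans mem_Collect_eq)
    show "{Poly_Mapping.single i l + Poly_Mapping.single j (n - l) | l. l \<le> n}
        \<subseteq> {m. n \<le> lookup m i + lookup m j}"
      using assms by (auto simp: lookup_add lookup_single when_def)
  next
    fix m
    assume "m \<in> {m. n \<le> lookup m i + lookup m j}"
    then have "mon_dvd (Poly_Mapping.single i (min (lookup m i) n)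
        + Poly_Mapping.single j (n - min (lookup m i) n)) m"
      using assms by (auto simp: mon_dvd_def lookup_add lookup_single when_def)
    then show "\<exists>g\<in>{Poly_Mapping.single i l + Poly_Mapping.single j (n - l) | l. l \<le> n}. mon_dvd g m"
      by fastforce
  qed
qed

definition tet_cond :: "(nat \<Rightarrow> nat) \<Rightarrow> nat list \<Rightarrow> (nat \<Rightarrow>\<^sub>0 nat) \<Rightarrow> bool" where
  "tet_cond \<sigma> b m \<longleftrightarrow>
     b!0 \<le> lookup m (\<sigma> 0) + lookup m (\<sigma> 1) \<and> b!1 \<le> lookup m (\<sigma> 0) + lookup m (\<sigma> 2) \<and>
     b!2 \<le> lookup m (\<sigma> 0) + lookup m (\<sigma> 3) \<and> b!3 \<le> lookup m (\<sigma> 1) + lookup m (\<sigma> 2) \<and>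
     b!4 \<le> lookup m (\<sigma> 1) + lookup m (\<sigma> 3) \<and> b!5 \<le> lookup m (\<sigma> 2) + lookup m (\<sigma> 3)"

lemma up_closed_tet_cond: "up_closed {m. tet_cond \<sigma> b m}"
  unfolding up_closed_def tet_cond_def mon_dvd_def
  by (smt (verit, best) add_le_mono le_trans mem_Collect_eq)

lemma perm_tet_ideal_eq:
  assumes "inj_on \<sigma> {0..<4}"
  shows "(perm_tet_ideal \<sigma> b :: 'k::field mpoly4 set) = mon_span {m. tet_cond \<sigma> b m}"
proof -
  have pairs: "{(i, j). i < j \<and> j < (4::nat)} = {(0,1), (0,2), (0,3), (1,2), (1,3), (2,3)}"
    by auto
  have "\<sigma> i \<noteq> \<sigma> j" if "i < j" "j < 4" for i j
    using assms that unfolding inj_on_def by (metis atLeastLessThan_iff less_imp_neq order.strict_trans zero_le)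
  then have "(perm_tet_ideal \<sigma> b :: 'k mpoly4 set) = (\<Inter>(i, j) \<in> {(i, j). i < j \<and> j < 4}.
      mon_span {m. b ! pidx i j \<le> lookup m (\<sigma> i) + lookup m (\<sigma> j)})"
    unfolding perm_tet_ideal_def by (intro INF_cong) (auto simp: pow_ideal_eq)
  also have "\<dots> = mon_span {m. tet_cond \<sigma> b m}"
    unfolding pairs tet_cond_def mon_span_def by (auto simp: pidx_def numeral_eq_Suc)
  finally show ?thesis .
qed

lemma tet_ideal_eq: "(tet_ideal a :: 'k::field mpoly4 set) = mon_span {m. tet_cond id a m}"
  unfolding tet_ideal_def by (rule perm_tet_ideal_eq) simp

lemma split_by_var:
  fixes p :: "'k::field mpoly4"
  obtains q s where "p = monom (unit_exp X) * q + s"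
    and "\<forall>m\<in>keys s. m \<in> keys p \<and> lookup m X = 0"
    and "keys q \<subseteq> (\<lambda>m. m - unit_exp X) ` {m \<in> keys p. 0 < lookup m X}"
proof
  define K where "K = {m \<in> keys p. 0 < lookup m X}"
  define K' where "K' = {m \<in> keys p. lookup m X = 0}"
  have "keys p = K \<union> K'"
    by (auto simp: K_def K'_def)
  then have "p = (\<Sum>m\<in>K \<union> K'. Poly_Mapping.single m (lookup p m))"
    using poly_mapping_sum_single[of p] by simp
  also have "\<dots> = (\<Sum>m\<in>K. Poly_Mapping.single m (lookup p m)) + (\<Sum>m\<in>K'. Poly_Mapping.single m (lookup p m))"
    by (rule sum.union_disjoint) (auto simp: K_def K'_def)
  also have "(\<Sum>m\<in>K. Poly_Mapping.single m (lookup p m)) =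
      monom (unit_exp X) * (\<Sum>m\<in>K. Poly_Mapping.single (m - unit_exp X) (lookup p m))"
    by (rule sum_single_factor) (use mon_dvd_unit_exp in \<open>simp add: K_def\<close>)
  finally show "p = monom (unit_exp X) * (\<Sum>m\<in>K. Poly_Mapping.single (m - unit_exp X) (lookup p m))
      + (\<Sum>m\<in>K'. Poly_Mapping.single m (lookup p m))" .
  show "\<forall>m\<in>keys (\<Sum>m\<in>K'. Poly_Mapping.single m (lookup p m)). m \<in> keys p \<and> lookup m X = 0"
    using keys_sum_single[of "\<lambda>m. m" "lookup p" K'] by (auto simp: K'_def)
  show "keys (\<Sum>m\<in>K. Poly_Mapping.single (m - unit_exp X) (lookup p m))
      \<subseteq> (\<lambda>m. m - unit_exp X) ` {m \<in> keys p. 0 < lookup m X}"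
    using keys_sum_single[of "\<lambda>m. m - unit_exp X" "lookup p" K] by (simp add: K_def)
qed

lemma var_monom_coprime:
  fixes A B :: "'k::field mpoly4"
  assumes eq: "monom (unit_exp X) * A = monom g * B" and "lookup g X = 0"
  obtains C where "B = monom (unit_exp X) * C" and "A = monom g * C"
proof -
  obtain q s where B: "B = monom (unit_exp X) * q + s" and s: "\<forall>m\<in>keys s. lookup m X = 0"
    using split_by_var[of B X] by metis
  have swap: "monom g * s = monom (unit_exp X) * (A - monom g * q)"
    using eq unfolding B by (simp add: algebra_simps)
  have no_X: "\<forall>m\<in>keys (monom g * s :: 'k mpoly4). lookup m X = 0"
    using keys_monom_mult[of g s] s \<open>lookup g X = 0\<close> by (force simp: lookup_add)
  have has_X: "\<forall>m\<in>keys (monom (unit_exp X) * (A - monom g * q) :: 'k mpoly4). 0 < lookup m X"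
    using keys_monom_mult[of "unit_exp X" "A - monom g * q"] by (force simp: lookup_add)
  have "keys (monom g * s :: 'k mpoly4) = {}"
    using no_X has_X unfolding swap by fastforce
  then have "s = 0"
    by (simp add: monom_nonzero)
  with eq B have "monom (unit_exp X) * A = monom (unit_exp X) * (monom g * q)"
    by (simp add: algebra_simps)
  then have "A = monom g * q"
    by (simp add: monom_nonzero)
  with B \<open>s = 0\<close> show ?thesis
    using that[of q] by simp
qed

lemma mon_span_basic_double_link:
  assumes up: "up_closed UJ" and F: "mF \<in> UJ"
    and shift: "\<And>m. m \<in> UI \<Longrightarrow> unit_exp X + m \<in> UJ"
    and unshift: "\<And>m. m \<in> UJ \<Longrightarrow> 0 < lookup m X \<Longrightarrow> m - unit_exp X \<in> UI"
    and avoid: "\<And>m. m \<in> UJ \<Longrightarrow> lookup m X = 0 \<Longrightarrow> mon_dvd mF m"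
  shows "(mon_span UJ :: 'k::field mpoly4 set) =
    {monom (unit_exp X) * x - monom mF * y | x y. x \<in> mon_span UI}"
proof
  show "(mon_span UJ :: 'k mpoly4 set) \<subseteq> {monom (unit_exp X) * x - monom mF * y | x y. x \<in> mon_span UI}"
  proof
    fix p :: "'k mpoly4"
    assume "p \<in> mon_span UJ"
    then have pJ: "keys p \<subseteq> UJ"
      by (simp add: mon_span_def)
    obtain q s where p: "p = monom (unit_exp X) * q + s"
      and s: "\<forall>m\<in>keys s. m \<in> keys p \<and> lookup m X = 0"
      and q: "keys q \<subseteq> (\<lambda>m. m - unit_exp X) ` {m \<in> keys p. 0 < lookup m X}"
      using split_by_var[of p X] by blast
    have "keys q \<subseteq> UI"
    proof
      fix m
      assume "m \<in> keys q"
      then obtain m0 where "m0 \<in> keys p" "0 < lookup m0 X" "m = m0 - unit_exp X"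
        using q by blast
      then show "m \<in> UI"
        using pJ unshift by blast
    qed
    then have "q \<in> mon_span UI"
      by (simp add: mon_span_def)
    have "s = (\<Sum>m\<in>keys s. Poly_Mapping.single m (lookup s m))"
      by (rule poly_mapping_sum_single)
    also have "\<dots> = monom mF * (\<Sum>m\<in>keys s. Poly_Mapping.single (m - mF) (lookup s m))"
      by (rule sum_single_factor) (use s pJ avoid in blast)
    finally obtain y where "s = monom mF * y"
      by blast
    with p have "p = monom (unit_exp X) * q - monom mF * (- y)"
      by simp
    with \<open>q \<in> mon_span UI\<close> show "p \<in> {monom (unit_exp X) * x - monom mF * y | x y. x \<in> mon_span UI}"
      by blast
  qed
  show "{monom (unit_exp X) * x - monom mF * y | x y. x \<in> mon_span UI} \<subseteq> (mon_span UJ :: 'k mpoly4 set)"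
  proof clarify
    fix x y :: "'k mpoly4"
    assume "x \<in> mon_span UI"
    then have "keys (monom (unit_exp X) * x) \<subseteq> UJ"
      using keys_monom_mult[of "unit_exp X" x] shift unfolding mon_span_def by blast
    moreover have "keys (monom mF * y) \<subseteq> UJ"
    proof
      fix m
      assume "m \<in> keys (monom mF * y)"
      then obtain m' where "m = mF + m'"
        using keys_monom_mult[of mF y] by blast
      then show "m \<in> UJ"
        using up F mon_dvd_add_right[of mF m'] unfolding up_closed_def by blast
    qed
    ultimately show "monom (unit_exp X) * x - monom mF * y \<in> mon_span UJ"
      using keys_diff[of "monom (unit_exp X) * x" "monom mF * y"] unfolding mon_span_def by blast
  qed
qed

section \<open>Degrees and the maximal ideal\<close>

lemma in_max_iff_keys: "in_max p \<longleftrightarrow> 0 \<notin> keys p"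
  unfolding in_max_def by (simp add: in_keys_iff)

lemma exp_add_eq_0: "(m :: nat \<Rightarrow>\<^sub>0 nat) + m' = 0 \<Longrightarrow> m = 0"
  by (metis add_is_0 lookup_add lookup_zero poly_mapping_eqI)

lemma in_max_mult_left: "in_max p \<Longrightarrow> in_max (p * q)"
  unfolding in_max_iff_keys using keys_mult[of p q] exp_add_eq_0 by fastforce

lemma in_max_add: "in_max p \<Longrightarrow> in_max q \<Longrightarrow> in_max (p + q)"
  unfolding in_max_def by (simp add: lookup_add)

lemma in_max_sum: "(\<And>i. i \<in> A \<Longrightarrow> in_max (f i)) \<Longrightarrow> in_max (sum f A)"
  unfolding in_max_def by (simp add: lookup_sum)

lemma in_max_zero: "in_max 0"
  unfolding in_max_def by simp

lemma unit_exp_nonzero: "unit_exp i \<noteq> 0"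
  by (metis lookup_single_eq lookup_zero zero_neq_one)

lemma in_max_var: "in_max (monom (unit_exp i) :: 'k::field mpoly4)"
  using unit_exp_nonzero[of i] unfolding in_max_def by (simp add: lookup_single when_def)

lemma mdeg_eq_sum: "finite K \<Longrightarrow> keys m \<subseteq> K \<Longrightarrow> mdeg m = (\<Sum>i\<in>K. lookup m i)"
  unfolding mdeg_def by (rule sum.mono_neutral_left) (auto simp: in_keys_iff)

lemma mdeg_add: "mdeg (m + m') = mdeg m + mdeg m'"
proof -
  let ?K = "keys m \<union> keys m'"
  have "mdeg (m + m') = (\<Sum>i\<in>?K. lookup (m + m') i)"
    by (rule mdeg_eq_sum) (use keys_add[of m m'] in auto)
  also have "\<dots> = (\<Sum>i\<in>?K. lookup m i) + (\<Sum>i\<in>?K. lookup m' i)"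
    by (simp add: lookup_add sum.distrib)
  also have "\<dots> = mdeg m + mdeg m'"
    by (subst (1 2) mdeg_eq_sum[of ?K]) auto
  finally show ?thesis .
qed

lemma mdeg_single: "mdeg (Poly_Mapping.single i k) = k"
  by (cases "k = 0") (simp_all add: mdeg_def)

lemma homog_mult: "homog p d \<Longrightarrow> homog q d' \<Longrightarrow> homog (p * q) (d + d')"
  unfolding homog_def using keys_mult[of p q] by (force simp: mdeg_add)

lemma homog_zero: "homog 0 d"
  unfolding homog_def by simp

lemma homog_uminus: "homog p d \<Longrightarrow> homog (- p) d"
  unfolding homog_def by simp

lemma homog_monom: "homog (monom m :: 'k::field mpoly4) (int (mdeg m))"
  unfolding homog_def by simp

lemma tdeg_monom: "tdeg (monom m :: 'k::field mpoly4) = mdeg m"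
  unfolding tdeg_def by (simp add: monom_nonzero)

section \<open>The mapping cone of a basic double link\<close>

lemma cone_rank_simps:
  "cone_rank r 0 = Suc (r 0)" "cone_rank r 1 = Suc (r 1)" "i \<ge> 2 \<Longrightarrow> cone_rank r i = r i"
  by (auto simp: cone_rank_def)

lemma cone_aug_sum:
  "(\<Sum>j<Suc (r 0). cone_aug L F r g j * v j) = L * (\<Sum>j<r 0. g j * v j) - F * v (r 0)"
proof -
  have "(\<Sum>j<r 0. cone_aug L F r g j * v j) = (\<Sum>j<r 0. L * (g j * v j))"
    by (rule sum.cong) (auto simp: cone_aug_def mult.assoc)
  then show ?thesis
    by (simp add: cone_aug_def sum_distrib_left)
qed

lemma cone_mat1_sum:
  "(\<Sum>j<Suc (r 1). cone_mat L r h M 1 k j * w j) =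
    (if k = r 0 then L * w (r 1) else (\<Sum>j<r 1. M 1 k j * w j) + h k * w (r 1))"
proof -
  have "(\<Sum>j<r 1. cone_mat L r h M 1 k j * w j) = (if k = r 0 then 0 else (\<Sum>j<r 1. M 1 k j * w j))"
    by (auto simp: cone_mat_def intro: sum.neutral sum.cong)
  then show ?thesis
    by (simp add: cone_mat_def)
qed

lemma cone_mat2_sum:
  "(\<Sum>j<r 2. cone_mat L r h M 2 k j * w j) = (if k = r 1 then 0 else (\<Sum>j<r 2. M 2 k j * w j))"
  by (auto simp: cone_mat_def intro: sum.neutral sum.cong)

lemma cone_mat_ge3: "i \<ge> 3 \<Longrightarrow> cone_mat L r h M i = M i"
  by (auto simp: cone_mat_def fun_eq_iff)

lemma cone_mat_in_max_iff:
  assumes M: "\<forall>i\<ge>1. \<forall>k<r (i - 1). \<forall>j<r i. in_max (M i k j)" and L: "in_max L"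
  shows "(\<forall>i\<ge>1. \<forall>k<cone_rank r (i - 1). \<forall>j<cone_rank r i. in_max (cone_mat L r h M i k j))
     \<longleftrightarrow> (\<forall>k<r 0. in_max (h k))"
proof
  assume "\<forall>i\<ge>1. \<forall>k<cone_rank r (i - 1). \<forall>j<cone_rank r i. in_max (cone_mat L r h M i k j)"
  then have "in_max (cone_mat L r h M 1 k (r 1))" if "k < r 0" for k
    using that by (simp add: cone_rank_def)
  then show "\<forall>k<r 0. in_max (h k)"
    by (simp add: cone_mat_def)
next
  assume h: "\<forall>k<r 0. in_max (h k)"
  show "\<forall>i\<ge>1. \<forall>k<cone_rank r (i - 1). \<forall>j<cone_rank r i. in_max (cone_mat L r h M i k j)"
  proof (intro allI impI)
    fix i k j
    assume i: "i \<ge> 1" and k: "k < cone_rank r (i - 1)" and j: "j < cone_rank r i"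
    consider "i = 1" | "i = 2" | "i \<ge> 3"
      using i by linarith
    then show "in_max (cone_mat L r h M i k j)"
    proof cases
      case 1
      with k j have "k \<le> r 0" "j \<le> r 1"
        by (simp_all add: cone_rank_def)
      with 1 show ?thesis
        using M L h in_max_zero by (cases "k = r 0"; cases "j = r 1") (simp_all add: cone_mat_def)
    next
      case 2
      with k j have "k \<le> r 1" "j < r 2"
        by (simp_all add: cone_rank_def)
      with 2 show ?thesis
        using M in_max_zero by (cases "k = r 1") (simp_all add: cone_mat_def)
    next
      case 3
      with k j have "k < r (i - 1)" "j < r i"
        using cone_rank_simps(3)[of "i - 1" r] cone_rank_simps(3)[of i r] by simp_all
      with 3 show ?thesis
        using M i by (simp add: cone_mat_ge3)
    qed
  qed
qed

text \<open>The basic double link \<open>J = L I + (F)\<close> with its exact sequence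
  \<open>0 \<rightarrow> R(-e-1) \<rightarrow> I(-1) \<oplus> R(-e) \<rightarrow> J \<rightarrow> 0\<close>: \<open>link\<close> is exactness on the right
  and \<open>coprime_LF\<close> exactness in the middle.\<close>
locale double_link_cone =
  fixes I J :: "'k::field mpoly4 set" and N :: nat and r :: "nat \<Rightarrow> nat"
    and dg :: "nat \<Rightarrow> nat \<Rightarrow> int" and g :: "nat \<Rightarrow> 'k mpoly4"
    and M :: "nat \<Rightarrow> nat \<Rightarrow> nat \<Rightarrow> 'k mpoly4" and L F :: "'k mpoly4" and e :: nat
    and h :: "nat \<Rightarrow> 'k mpoly4"
  assumes res: "graded_free_res I N r dg g M"
    and homog_L: "homog L 1" and homog_F: "homog F (int e)"
    and homog_lift: "\<forall>j<r 0. homog (h j) (int e - dg 0 j)"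
    and lift: "(\<Sum>j<r 0. g j * h j) = F"
    and link: "J = {L * x - F * y | x y. x \<in> I}"
    and coprime_LF: "\<And>A B. L * A = F * B \<Longrightarrow> \<exists>C. B = L * C \<and> A = F * C"
    and L_nonzero: "L \<noteq> 0"
begin

lemma res_image: "{\<Sum>j<r 0. g j * v j | v. True} = I"
  and res_exact0: "(\<Sum>j<r 0. g j * v j) = 0 \<longleftrightarrow> (\<exists>w. \<forall>k<r 0. v k = (\<Sum>j<r 1. M 1 k j * w j))"
  and res_exact: "i \<ge> 1 \<Longrightarrow> (\<forall>k<r (i - 1). (\<Sum>j<r i. M i k j * v j) = 0) \<longleftrightarrow>
      (\<exists>w. \<forall>k<r i. v k = (\<Sum>j<r (Suc i). M (Suc i) k j * w j))"
  using res unfolding graded_free_res_def by blast+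

lemma cone_homog_aug:
  assumes "j < cone_rank r 0"
  shows "homog (cone_aug L F r g j) (cone_deg r dg e 0 j)"
proof (cases "j = r 0")
  case True
  then show ?thesis
    using homog_F by (simp add: cone_aug_def cone_deg_def homog_uminus)
next
  case False
  with assms have "homog (g j) (dg 0 j)"
    using res by (simp add: graded_free_res_def cone_rank_def)
  then have "homog (L * g j) (1 + dg 0 j)"
    by (rule homog_mult[OF homog_L])
  with False show ?thesis
    by (simp add: cone_aug_def cone_deg_def add.commute)
qed

lemma cone_homog_mat:
  assumes i: "i \<ge> 1" and k: "k < cone_rank r (i - 1)" and j: "j < cone_rank r i"
  shows "homog (cone_mat L r h M i k j) (cone_deg r dg e i j - cone_deg r dg e (i - 1) k)"
proof -
  have M: "homog (M i k j) (dg i j - dg (i - 1) k)" if "k < r (i - 1)" "j < r i"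
    using res i that unfolding graded_free_res_def by blast
  consider "i = 1" | "i = 2" | "i \<ge> 3"
    using i by linarith
  then show ?thesis
  proof cases
    case 1
    with k j have "k \<le> r 0" "j \<le> r 1"
      by (simp_all add: cone_rank_def)
    with 1 show ?thesis
      using M homog_L homog_lift homog_zero
      by (cases "k = r 0"; cases "j = r 1") (simp_all add: cone_mat_def cone_deg_def)
  next
    case 2
    with k j have "k \<le> r 1" "j < r 2"
      by (simp_all add: cone_rank_def)
    with 2 show ?thesis
      using M homog_zero by (cases "k = r 1") (simp_all add: cone_mat_def cone_deg_def)
  next
    case 3
    with k j have "k < r (i - 1)" "j < r i"
      using cone_rank_simps(3)[of "i - 1" r] cone_rank_simps(3)[of i r] by simp_all
    moreover have "i \<noteq> 1" "i - 1 \<noteq> 1" "i \<noteq> 0"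
      using 3 by simp_all
    ultimately show ?thesis
      using M 3 by (simp add: cone_mat_ge3 cone_deg_def)
  qed
qed

lemma cone_image: "{\<Sum>j<cone_rank r 0. cone_aug L F r g j * v j | v. True} = J"
proof (intro equalityI subsetI)
  fix p
  assume "p \<in> {\<Sum>j<cone_rank r 0. cone_aug L F r g j * v j | v. True}"
  then obtain v where "p = (\<Sum>j<Suc (r 0). cone_aug L F r g j * v j)"
    by (auto simp: cone_rank_simps simp del: sum.lessThan_Suc)
  then have "p = L * (\<Sum>j<r 0. g j * v j) - F * v (r 0)"
    unfolding cone_aug_sum .
  moreover have "(\<Sum>j<r 0. g j * v j) \<in> I"
    using res_image by blast
  ultimately show "p \<in> J"
    unfolding link by blast
next
  fix p
  assume "p \<in> J"
  then obtain x y where p: "p = L * x - F * y" and "x \<in> I"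
    unfolding link by blast
  then obtain u where x: "x = (\<Sum>j<r 0. g j * u j)"
    using res_image by blast
  have "(\<Sum>j<r 0. g j * (u(r 0 := y)) j) = x"
    unfolding x by (rule sum.cong) auto
  then have "p = (\<Sum>j<cone_rank r 0. cone_aug L F r g j * (u(r 0 := y)) j)"
    unfolding cone_rank_simps cone_aug_sum p by simp
  then show "p \<in> {\<Sum>j<cone_rank r 0. cone_aug L F r g j * v j | v. True}"
    by blast
qed

text \<open>A syzygy \<open>(v, v\<^sub>0)\<close> of \<open>(L g, -F)\<close> satisfies \<open>L (g\<cdot>v) = F v\<^sub>0\<close>;
  coprimality gives \<open>v\<^sub>0 = L C\<close> and \<open>g\<cdot>v = F C\<close>, so that \<open>v - C h\<close> is a syzygy of \<open>g\<close>.\<close>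
lemma cone_exact_aug:
  "(\<Sum>j<cone_rank r 0. cone_aug L F r g j * v j) = 0 \<longleftrightarrow>
     (\<exists>w. \<forall>k<cone_rank r 0. v k = (\<Sum>j<cone_rank r 1. cone_mat L r h M 1 k j * w j))"
proof
  assume "(\<Sum>j<cone_rank r 0. cone_aug L F r g j * v j) = 0"
  then have "L * (\<Sum>j<r 0. g j * v j) = F * v (r 0)"
    unfolding cone_rank_simps cone_aug_sum by simp
  then obtain C where C: "v (r 0) = L * C" "(\<Sum>j<r 0. g j * v j) = F * C"
    using coprime_LF by blast
  have "(\<Sum>j<r 0. g j * (v j - h j * C)) = (\<Sum>j<r 0. g j * v j) - (\<Sum>j<r 0. g j * h j) * C"
    by (simp add: right_diff_distrib sum_subtractf sum_distrib_right mult.assoc)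
  also have "\<dots> = 0"
    using C lift by simp
  finally obtain w where w: "\<forall>k<r 0. v k - h k * C = (\<Sum>j<r 1. M 1 k j * w j)"
    using res_exact0[of "\<lambda>j. v j - h j * C"] by auto
  have "(\<Sum>j<r 1. M 1 k j * (w(r 1 := C)) j) = (\<Sum>j<r 1. M 1 k j * w j)" for k
    by (rule sum.cong) auto
  with w C have "\<forall>k<Suc (r 0). v k = (\<Sum>j<Suc (r 1). cone_mat L r h M 1 k j * (w(r 1 := C)) j)"
    unfolding cone_mat1_sum All_less_Suc by (simp add: diff_eq_eq)
  then show "\<exists>w. \<forall>k<cone_rank r 0. v k = (\<Sum>j<cone_rank r 1. cone_mat L r h M 1 k j * w j)"
    unfolding cone_rank_simps by blast
next
  assume "\<exists>w. \<forall>k<cone_rank r 0. v k = (\<Sum>j<cone_rank r 1. cone_mat L r h M 1 k j * w j)"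
  then obtain w where v: "v (r 0) = L * w (r 1)"
    and w: "\<forall>k<r 0. v k = (\<Sum>j<r 1. M 1 k j * w j) + h k * w (r 1)"
    unfolding cone_rank_simps cone_mat1_sum All_less_Suc by auto
  have "(\<Sum>k<r 0. g k * (\<Sum>j<r 1. M 1 k j * w j)) = 0"
    using res_exact0[of "\<lambda>k. \<Sum>j<r 1. M 1 k j * w j"] by auto
  moreover have "(\<Sum>j<r 0. g j * v j) =
      (\<Sum>k<r 0. g k * (\<Sum>j<r 1. M 1 k j * w j)) + (\<Sum>k<r 0. g k * h k) * w (r 1)"
    using w by (simp add: distrib_left sum.distrib sum_distrib_right mult.assoc)
  ultimately show "(\<Sum>j<cone_rank r 0. cone_aug L F r g j * v j) = 0"
    unfolding cone_rank_simps cone_aug_sum v lift by simp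
qed

lemma cone_exact1:
  "(\<forall>k<cone_rank r 0. (\<Sum>j<cone_rank r 1. cone_mat L r h M 1 k j * v j) = 0) \<longleftrightarrow>
     (\<exists>w. \<forall>k<cone_rank r 1. v k = (\<Sum>j<cone_rank r 2. cone_mat L r h M 2 k j * w j))"
proof -
  have "cone_rank r 2 = r 2"
    by (simp add: cone_rank_def)
  have "(\<forall>k<Suc (r 0). (\<Sum>j<Suc (r 1). cone_mat L r h M 1 k j * v j) = 0) \<longleftrightarrow>
      v (r 1) = 0 \<and> (\<forall>k<r 0. (\<Sum>j<r 1. M 1 k j * v j) = 0)"
    unfolding cone_mat1_sum All_less_Suc using L_nonzero by auto
  also have "\<dots> \<longleftrightarrow> v (r 1) = 0 \<and> (\<exists>w. \<forall>k<r 1. v k = (\<Sum>j<r 2. M 2 k j * w j))"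
    using res_exact[of 1 v] by (simp add: numeral_2_eq_2)
  also have "\<dots> \<longleftrightarrow> (\<exists>w. \<forall>k<Suc (r 1). v k = (\<Sum>j<r 2. cone_mat L r h M 2 k j * w j))"
    unfolding cone_mat2_sum All_less_Suc by auto
  finally show ?thesis
    unfolding cone_rank_simps(1,2) \<open>cone_rank r 2 = r 2\<close> .
qed

lemma cone_exact2:
  "(\<forall>k<cone_rank r 1. (\<Sum>j<cone_rank r 2. cone_mat L r h M 2 k j * v j) = 0) \<longleftrightarrow>
     (\<exists>w. \<forall>k<cone_rank r 2. v k = (\<Sum>j<cone_rank r 3. cone_mat L r h M 3 k j * w j))"
proof -
  have ranks: "cone_rank r 2 = r 2" "cone_rank r 3 = r 3"
    by (simp_all add: cone_rank_def)
  have "(\<forall>k<Suc (r 1). (\<Sum>j<r 2. cone_mat L r h M 2 k j * v j) = 0) \<longleftrightarrow>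
      (\<forall>k<r 1. (\<Sum>j<r 2. M 2 k j * v j) = 0)"
    unfolding cone_mat2_sum All_less_Suc by auto
  also have "\<dots> \<longleftrightarrow> (\<exists>w. \<forall>k<r 2. v k = (\<Sum>j<r 3. M 3 k j * w j))"
    using res_exact[of 2 v] by (simp add: numeral_3_eq_3 numeral_2_eq_2)
  finally show ?thesis
    unfolding cone_rank_simps(2) ranks cone_mat_ge3[OF order_refl] .
qed

lemma cone_exact_ge3:
  assumes "i \<ge> 3"
  shows "(\<forall>k<cone_rank r (i - 1). (\<Sum>j<cone_rank r i. cone_mat L r h M i k j * v j) = 0) \<longleftrightarrow>
     (\<exists>w. \<forall>k<cone_rank r i. v k = (\<Sum>j<cone_rank r (Suc i). cone_mat L r h M (Suc i) k j * w j))"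
  using assms res_exact[of i v] by (simp add: cone_rank_simps cone_mat_ge3)

lemma cone_graded_free_res:
  "graded_free_res J (cone_len N) (cone_rank r) (cone_deg r dg e) (cone_aug L F r g) (cone_mat L r h M)"
proof -
  have ranks: "cone_rank r i = 0" if "i > cone_len N" for i
    using res that by (auto simp: graded_free_res_def cone_len_def cone_rank_def)
  have exact: "(\<forall>k<cone_rank r (i - 1). (\<Sum>j<cone_rank r i. cone_mat L r h M i k j * v j) = 0) \<longleftrightarrow>
     (\<exists>w. \<forall>k<cone_rank r i. v k = (\<Sum>j<cone_rank r (Suc i). cone_mat L r h M (Suc i) k j * w j))"
    if "i \<ge> 1" for i v
  proof -
    consider "i = 1" | "i = 2" | "i \<ge> 3"
      using \<open>i \<ge> 1\<close> by linarith
    then show ?thesis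
    proof cases
      case 1
      then show ?thesis
        using cone_exact1 by (simp add: numeral_2_eq_2)
    next
      case 2
      then show ?thesis
        using cone_exact2 by (simp add: numeral_3_eq_3)
    next
      case 3
      then show ?thesis
        by (rule cone_exact_ge3)
    qed
  qed
  show ?thesis
    unfolding graded_free_res_def
    by (intro conjI allI impI ranks cone_homog_aug cone_homog_mat cone_image cone_exact_aug exact)
qed

lemma cone_min_graded_free_res_iff:
  assumes "min_graded_free_res I N r dg g M" and "in_max L"
  shows "min_graded_free_res J (cone_len N) (cone_rank r) (cone_deg r dg e) (cone_aug L F r g)
      (cone_mat L r h M) \<longleftrightarrow> (\<forall>k<r 0. in_max (h k))"
  using assms cone_graded_free_res cone_mat_in_max_iff
  unfolding min_graded_free_res_def by blast

end

section \<open>Lifting a monomial along a minimal presentation\<close>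

lemma generator_in_image:
  fixes g :: "nat \<Rightarrow> 'a::comm_semiring_1"
  assumes "j < n"
  shows "g j \<in> {\<Sum>j<n. g j * v j | v. True}"
proof -
  have "(\<Sum>k<n. g k * (if k = j then 1 else 0)) = (\<Sum>k<n. if k = j then g k else 0)"
    by (rule sum.cong) auto
  then have "g j = (\<Sum>k<n. g k * (if k = j then 1 else 0))"
    using assms by simp
  then show ?thesis
    by (intro CollectI exI[of _ "\<lambda>k. if k = j then 1 else 0"]) simp
qed

text \<open>A lift of \<open>x\<^sup>m\<close> is unique up to syzygies, which have coefficients in the maximal
  ideal by minimality of the presentation. So the coefficients of any lift lie in the maximal
  ideal iff \<open>x\<^sup>m\<close> lies in the maximal ideal times the ideal, which for a monomial ideal means
  that \<open>x\<^sup>m / x\<^sub>i\<close> lies in the ideal for some variable \<open>x\<^sub>i\<close> dividing \<open>x\<^sup>m\<close>.\<close>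
lemma lift_in_max_iff:
  fixes g h :: "nat \<Rightarrow> 'k::field mpoly4"
  assumes up: "up_closed U"
    and image: "{\<Sum>j<n. g j * v j | v. True} = mon_span U"
    and syz: "\<And>v. (\<Sum>j<n. g j * v j) = 0 \<longleftrightarrow> (\<exists>w. \<forall>k<n. v k = (\<Sum>j<n'. P k j * w j))"
    and P: "\<forall>k<n. \<forall>j<n'. in_max (P k j)"
    and lift: "(\<Sum>j<n. g j * h j) = monom m"
  shows "(\<forall>k<n. in_max (h k)) \<longleftrightarrow> (\<exists>i. 0 < lookup m i \<and> m - unit_exp i \<in> U)"
proof
  assume h: "\<forall>k<n. in_max (h k)"
  show "\<exists>i. 0 < lookup m i \<and> m - unit_exp i \<in> U"
  proof (rule ccontr)
    assume none: "\<nexists>i. 0 < lookup m i \<and> m - unit_exp i \<in> U"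
    have "lookup (g j * h j) m = 0" if "j < n" for j
    proof (rule ccontr)
      assume "lookup (g j * h j) m \<noteq> 0"
      then obtain p q where pq: "p \<in> keys (g j)" "q \<in> keys (h j)" "m = p + q"
        using keys_mult[of "g j" "h j"] by (auto simp: in_keys_iff)
      have "q \<noteq> 0"
        using h that pq(2) unfolding in_max_iff_keys by auto
      then obtain i where i: "lookup q i \<noteq> 0"
        by (metis lookup_zero poly_mapping_eqI)
      have "p \<in> U"
        using generator_in_image[OF that, of g] pq(1) unfolding image mon_span_def by blast
      moreover have "mon_dvd p (m - unit_exp i)"
        using pq(3) i by (auto simp: mon_dvd_def lookup_add lookup_minus lookup_single when_def)
      ultimately have "m - unit_exp i \<in> U"
        using up unfolding up_closed_def by blast
      moreover have "0 < lookup m i"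
        using pq(3) i by (simp add: lookup_add)
      ultimately show False
        using none by blast
    qed
    then have "lookup (monom m :: 'k mpoly4) m = 0"
      unfolding lift[symmetric] lookup_sum by simp
    then show False
      by simp
  qed
next
  assume "\<exists>i. 0 < lookup m i \<and> m - unit_exp i \<in> U"
  then obtain i where i: "0 < lookup m i" "m - unit_exp i \<in> U"
    by blast
  have "monom (m - unit_exp i) \<in> {\<Sum>j<n. g j * v j | v. True}"
    unfolding image using i(2) by simp
  then obtain u where u: "monom (m - unit_exp i) = (\<Sum>j<n. g j * u j)"
    by blast
  have "monom m = monom (m - unit_exp i) * (monom (unit_exp i) :: 'k mpoly4)"
    using i(1) mon_dvd_unit_exp by (intro single_eq_mult_monom) simp
  also have "\<dots> = (\<Sum>j<n. g j * (monom (unit_exp i) * u j))"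
    unfolding u sum_distrib_right by (simp add: ac_simps)
  finally have "(\<Sum>j<n. g j * (h j - monom (unit_exp i) * u j)) = 0"
    using lift by (simp add: right_diff_distrib sum_subtractf)
  then obtain w where w: "\<forall>k<n. h k - monom (unit_exp i) * u k = (\<Sum>j<n'. P k j * w j)"
    using syz[of "\<lambda>j. h j - monom (unit_exp i) * u j"] by auto
  show "\<forall>k<n. in_max (h k)"
  proof (intro allI impI)
    fix k
    assume "k < n"
    have "in_max (\<Sum>j<n'. P k j * w j)"
      using P \<open>k < n\<close> by (auto intro: in_max_sum in_max_mult_left)
    moreover have "in_max (monom (unit_exp i) * u k)"
      by (rule in_max_mult_left[OF in_max_var])
    ultimately have "in_max ((h k - monom (unit_exp i) * u k) + monom (unit_exp i) * u k)"
      using w \<open>k < n\<close> by (simp add: in_max_add)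
    then show "in_max (h k)"
      by simp
  qed
qed

section \<open>Tetrahedral curves\<close>

definition exp4 :: "nat \<Rightarrow> nat \<Rightarrow> nat \<Rightarrow> nat \<Rightarrow> nat \<Rightarrow>\<^sub>0 nat" where
  "exp4 x0 x1 x2 x3 = Poly_Mapping.single 0 x0 + Poly_Mapping.single 1 x1
     + Poly_Mapping.single 2 x2 + Poly_Mapping.single 3 x3"

lemma lookup_exp4:
  "lookup (exp4 x0 x1 x2 x3) k =
    (if k = 0 then x0 else if k = 1 then x1 else if k = 2 then x2 else if k = 3 then x3 else 0)"
  by (simp add: exp4_def lookup_add lookup_single when_def)

definition facet_exp :: "nat \<Rightarrow> nat list \<Rightarrow> nat \<Rightarrow>\<^sub>0 nat" where
  "facet_exp X a =
    (if X = 0 then exp4 0 (a!0) (a!1) (a!2)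
     else if X = 1 then exp4 (a!0) 0 (a!3) (a!4)
     else if X = 2 then exp4 (a!1) (a!3) 0 (a!5)
     else exp4 (a!2) (a!4) (a!5) 0)"

lemma red_F_eq: "(red_F X a :: 'k::field mpoly4) = monom (facet_exp X a)"
  by (simp add: red_F_def facet_exp_def exp4_def var_power mult_single add_ac)

lemma red_L_eq: "(red_L X :: 'k::field mpoly4) = monom (unit_exp X)"
  by (simp add: red_L_def var_def)

lemma less4_cases: "(X::nat) < 4 \<Longrightarrow> X = 0 \<or> X = 1 \<or> X = 2 \<or> X = 3"
  by auto

lemma ex_less4: "(\<exists>i<(4::nat). Q i) \<longleftrightarrow> Q 0 \<or> Q 1 \<or> Q 2 \<or> Q 3"
  by (auto simp: less_Suc_eq numeral_eq_Suc)

lemma lookup_facet_exp_self: "X < 4 \<Longrightarrow> lookup (facet_exp X a) X = 0"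
  using less4_cases[of X] by (auto simp: facet_exp_def lookup_exp4)

lemma tet_ideal_basic_double_link:
  assumes len: "length a = 6" and X: "X < 4" and applies: "reduction_applies X a"
  shows "(tet_ideal a :: 'k::field mpoly4 set) =
    {red_L X * x - red_F X a * y | x y. x \<in> tet_ideal (red_tuple X a)}"
  unfolding tet_ideal_eq red_L_eq red_F_eq
proof (rule mon_span_basic_double_link)
  obtain a0 a1 a2 a3 a4 a5 where a: "a = [a0, a1, a2, a3, a4, a5]"
    using len by (auto simp: numeral_eq_Suc length_Suc_conv)
  note X_cases = less4_cases[OF X]
  show "up_closed {m. tet_cond id a m}"
    by (rule up_closed_tet_cond)
  show "facet_exp X a \<in> {m. tet_cond id a m}"
    using X_cases applies by (auto simp: a tet_cond_def facet_exp_def lookup_exp4 reduction_applies_def)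
  show "unit_exp X + m \<in> {m. tet_cond id a m}" if "m \<in> {m. tet_cond id (red_tuple X a) m}" for m
    using X_cases that by (auto simp: a tet_cond_def red_tuple_def lookup_add lookup_single when_def)
  show "m - unit_exp X \<in> {m. tet_cond id (red_tuple X a) m}"
    if "m \<in> {m. tet_cond id a m}" "0 < lookup m X" for m
    using X_cases that by (auto simp: a tet_cond_def red_tuple_def lookup_minus lookup_single when_def)
  show "mon_dvd (facet_exp X a) m" if "m \<in> {m. tet_cond id a m}" "lookup m X = 0" for m
    using X_cases that by (auto simp: a tet_cond_def facet_exp_def lookup_exp4 mon_dvd_def)
qed

lemma tet_double_link_cone:
  assumes len: "length a = 6" and X: "X < 4" and applies: "reduction_applies X a"
    and res: "graded_free_res (tet_ideal (red_tuple X a)) N r dg g M"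
    and homog_lift: "\<forall>j<r 0. homog (h j) (int (tdeg (red_F X a :: 'k mpoly4)) - dg 0 j)"
    and lift: "(\<Sum>j<r 0. g j * h j) = red_F X a"
  shows "double_link_cone (tet_ideal (red_tuple X a)) (tet_ideal a) N r dg g M
    (red_L X) (red_F X a :: 'k::field mpoly4) (tdeg (red_F X a :: 'k mpoly4)) h"
proof
  show "homog (red_L X :: 'k mpoly4) 1"
    using homog_monom[of "unit_exp X"] by (simp add: red_L_eq mdeg_single)
  show "homog (red_F X a :: 'k mpoly4) (int (tdeg (red_F X a :: 'k mpoly4)))"
    using homog_monom[of "facet_exp X a"] by (simp add: red_F_eq tdeg_monom)
  show "tet_ideal a = {red_L X * x - red_F X a * y | x y. x \<in> tet_ideal (red_tuple X a)}"
    by (rule tet_ideal_basic_double_link[OF len X applies])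
  show "\<exists>C. B = red_L X * C \<and> A = red_F X a * C" if "red_L X * A = red_F X a * (B :: 'k mpoly4)" for A B
    using var_monom_coprime[OF that[unfolded red_L_eq red_F_eq] lookup_facet_exp_self[OF X]]
    by (metis red_L_eq red_F_eq)
qed (use res homog_lift lift monom_nonzero in \<open>simp_all add: red_L_eq\<close>)

definition red_F_in_max_I :: "nat \<Rightarrow> nat list \<Rightarrow> bool" where
  "red_F_in_max_I X a \<longleftrightarrow>
     (\<exists>i. 0 < lookup (facet_exp X a) i \<and> tet_cond id (red_tuple X a) (facet_exp X a - unit_exp i))"

lemma tet_lift_in_max_iff:
  assumes res: "min_graded_free_res (tet_ideal (red_tuple X a)) N r dg g M"
    and lift: "(\<Sum>j<r 0. g j * h j) = red_F X a"
  shows "(\<forall>k<r 0. in_max (h k)) \<longleftrightarrow> red_F_in_max_I X a"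
proof -
  have "(\<forall>k<r 0. in_max (h k)) \<longleftrightarrow> (\<exists>i. 0 < lookup (facet_exp X a) i \<and>
      facet_exp X a - unit_exp i \<in> {m. tet_cond id (red_tuple X a) m})"
  proof (rule lift_in_max_iff)
    show "up_closed {m. tet_cond id (red_tuple X a) m}"
      by (rule up_closed_tet_cond)
    show "{\<Sum>j<r 0. g j * v j | v. True} = mon_span {m. tet_cond id (red_tuple X a) m}"
      using res unfolding min_graded_free_res_def graded_free_res_def tet_ideal_eq by blast
    show "(\<Sum>j<r 0. g j * v j) = 0 \<longleftrightarrow> (\<exists>w. \<forall>k<r 0. v k = (\<Sum>j<r 1. M 1 k j * w j))" for v
      using res unfolding min_graded_free_res_def graded_free_res_def by blast
    show "\<forall>k<r 0. \<forall>j<r 1. in_max (M 1 k j)"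
      using res by (simp add: min_graded_free_res_def)
    show "(\<Sum>j<r 0. g j * h j) = monom (facet_exp X a)"
      using lift by (simp add: red_F_eq)
  qed
  then show ?thesis
    by (simp add: red_F_in_max_I_def)
qed

lemma lookup_facet_exp_ge4: "4 \<le> i \<Longrightarrow> lookup (facet_exp X a) i = 0"
  by (simp add: facet_exp_def lookup_exp4)

lemma red_F_in_max_I_bounded:
  "red_F_in_max_I X a \<longleftrightarrow>
     (\<exists>i<4. 0 < lookup (facet_exp X a) i \<and> tet_cond id (red_tuple X a) (facet_exp X a - unit_exp i))"
  unfolding red_F_in_max_I_def by (metis lookup_facet_exp_ge4 less_irrefl not_less)

definition special_tuple :: "nat list \<Rightarrow> bool" where
  "special_tuple a \<longleftrightarrow> (\<exists>r>0. a = [0,r,r,r,r,0] \<or> a = [r,0,r,r,0,r] \<or> a = [r,r,0,0,r,r])"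

lemma special_tuple_iff:
  "special_tuple [a0, a1, a2, a3, a4, a5] \<longleftrightarrow>
     (a0 = 0 \<and> a5 = 0 \<and> a1 = a2 \<and> a3 = a1 \<and> a4 = a1 \<and> 0 < a1)
     \<or> (a1 = 0 \<and> a4 = 0 \<and> a0 = a2 \<and> a3 = a0 \<and> a5 = a0 \<and> 0 < a0)
     \<or> (a2 = 0 \<and> a3 = 0 \<and> a0 = a1 \<and> a4 = a0 \<and> a5 = a0 \<and> 0 < a0)"
  by (auto simp: special_tuple_def)

text \<open>The arithmetic core, in coordinates adapted to the facet opposite to a vertex \<open>v\<close>:
  \<open>p, q, s\<close> are the entries on the edges from \<open>v\<close> to the three other vertices (the exponents
  of \<open>F\<close>), and \<open>pq, ps, qs\<close> are the entries on the edges joining those vertices.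
  The hypotheses \<open>W\<close> express that the facet has maximal weight.\<close>
lemma facet_arith:
  fixes p q s pq ps qs :: nat
  assumes R: "pq \<le> p + q" "ps \<le> p + s" "qs \<le> q + s"
    and W: "pq + ps \<le> q + s" "pq + qs \<le> p + s" "ps + qs \<le> p + q"
    and nontrivial: "p + q + s + pq + ps + qs \<noteq> 0"
    and C: "C \<longleftrightarrow> (0 < p \<and> pq < p + q \<and> ps < p + s) \<or> (0 < q \<and> pq < p + q \<and> qs < q + s)
      \<or> (0 < s \<and> ps < p + s \<and> qs < q + s)"
    and S: "S \<longleftrightarrow> (p = 0 \<and> qs = 0 \<and> q = s \<and> pq = q \<and> ps = q \<and> 0 < q)
      \<or> (q = 0 \<and> ps = 0 \<and> p = s \<and> pq = p \<and> qs = p \<and> 0 < p)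
      \<or> (s = 0 \<and> pq = 0 \<and> p = q \<and> ps = p \<and> qs = p \<and> 0 < p)"
  shows "C \<longleftrightarrow> \<not> S"
proof -
  have S if "\<not> C"
  proof -
    have "p = 0 \<or> pq = p + q \<or> ps = p + s" "q = 0 \<or> pq = p + q \<or> qs = q + s"
        "s = 0 \<or> ps = p + s \<or> qs = q + s"
      using that unfolding C using R by auto
    moreover have "\<not> (p = 0 \<and> q = 0 \<and> s = 0)" "\<not> (pq = p + q \<and> s = 0)"
        "\<not> (ps = p + s \<and> q = 0)" "\<not> (qs = q + s \<and> p = 0)"
      using R W nontrivial by linarith+
    ultimately consider "pq = p + q" "ps = p + s" | "pq = p + q" "qs = q + s" | "ps = p + s" "qs = q + s"
      by blast
    then show S
    proof cases
      case 1
      then have "p = 0 \<and> qs = 0 \<and> q = s \<and> pq = q \<and> ps = q \<and> 0 < q"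
        using R W nontrivial by linarith
      then show ?thesis
        unfolding S by blast
    next
      case 2
      then have "q = 0 \<and> ps = 0 \<and> p = s \<and> pq = p \<and> qs = p \<and> 0 < p"
        using R W nontrivial by linarith
      then show ?thesis
        unfolding S by blast
    next
      case 3
      then have "s = 0 \<and> pq = 0 \<and> p = q \<and> ps = p \<and> qs = p \<and> 0 < p"
        using R W nontrivial by linarith
      then show ?thesis
        unfolding S by blast
    qed
  qed
  moreover have "\<not> S" if C
    using that unfolding C S by auto
  ultimately show ?thesis
    by blast
qed

lemma le_pred_iff: "0 < n \<Longrightarrow> y \<le> n - Suc 0 \<longleftrightarrow> y < n"
  by arith

lemma red_F_in_max_I_iff_not_special:
  assumes len: "length a = 6" and X: "X < 4" and applies: "reduction_applies X a"
    and nontrivial: "\<not> trivial_curve a" and maxweight: "\<forall>Y<4. facet_weight Y a \<le> facet_weight X a"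
  shows "red_F_in_max_I X a \<longleftrightarrow> \<not> special_tuple a"
proof -
  obtain a0 a1 a2 a3 a4 a5 where a: "a = [a0, a1, a2, a3, a4, a5]"
    using len by (auto simp: numeral_eq_Suc length_Suc_conv)
  have weights: "facet_weight 0 a \<le> facet_weight X a" "facet_weight 1 a \<le> facet_weight X a"
      "facet_weight 2 a \<le> facet_weight X a" "facet_weight 3 a \<le> facet_weight X a"
    using maxweight by auto
  have nonzero: "a0 + a1 + a2 + a3 + a4 + a5 \<noteq> 0"
    using nontrivial unfolding a trivial_curve_def by (auto simp: less_Suc_eq numeral_eq_Suc)
  note facet_simps = a red_F_in_max_I_bounded ex_less4 reduction_applies_def facet_weight_def tet_cond_def
    red_tuple_def facet_exp_def lookup_minus lookup_single when_def lookup_exp4 special_tuple_iff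
    le_pred_iff
  consider "X = 0" | "X = 1" | "X = 2" | "X = 3"
    using X by linarith
  then show ?thesis
  proof cases
    case 1
    show ?thesis
      by (rule facet_arith[where p = a0 and q = a1 and s = a2 and pq = a3 and ps = a4 and qs = a5])
        (use applies weights nonzero 1 in \<open>auto simp: facet_simps cong: conj_cong\<close>)
  next
    case 2
    show ?thesis
      by (rule facet_arith[where p = a0 and q = a3 and s = a4 and pq = a1 and ps = a2 and qs = a5])
        (use applies weights nonzero 2 in \<open>auto simp: facet_simps cong: conj_cong\<close>)
  next
    case 3
    show ?thesis
      by (rule facet_arith[where p = a1 and q = a3 and s = a5 and pq = a0 and ps = a2 and qs = a4])
        (use applies weights nonzero 3 in \<open>auto simp: facet_simps cong: conj_cong\<close>)
  next
    case 4
    show ?thesis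
      by (rule facet_arith[where p = a2 and q = a4 and s = a5 and pq = a0 and ps = a1 and qs = a3])
        (use applies weights nonzero 4 in \<open>auto simp: facet_simps cong: conj_cong\<close>)
  qed
qed

lemma tet_cond_entries_le:
  assumes "\<And>m. tet_cond id c m \<Longrightarrow> tet_cond id a m"
  shows "a!0 \<le> c!0 \<and> a!1 \<le> c!1 \<and> a!2 \<le> c!2 \<and> a!3 \<le> c!3 \<and> a!4 \<le> c!4 \<and> a!5 \<le> c!5"
proof -
  define B where "B = c!0 + c!1 + c!2 + c!3 + c!4 + c!5"
  have "tet_cond id a (exp4 (c!0) 0 B B)" "tet_cond id a (exp4 (c!1) B 0 B)"
    "tet_cond id a (exp4 (c!2) B B 0)" "tet_cond id a (exp4 B (c!3) 0 B)"
    "tet_cond id a (exp4 B (c!4) B 0)" "tet_cond id a (exp4 B B (c!5) 0)"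
    by (rule assms, simp add: tet_cond_def lookup_exp4 B_def)+
  then show ?thesis
    by (simp add: tet_cond_def lookup_exp4)
qed

lemma tet_cond_inject:
  assumes "length a = 6" "length c = 6" and "\<And>m. tet_cond id a m \<longleftrightarrow> tet_cond id c m"
  shows "a = c"
proof (rule nth_equalityI)
  show "length a = length c"
    using assms(1,2) by simp
  have "a!0 = c!0 \<and> a!1 = c!1 \<and> a!2 = c!2 \<and> a!3 = c!3 \<and> a!4 = c!4 \<and> a!5 = c!5"
    using tet_cond_entries_le[of c a] tet_cond_entries_le[of a c] assms(3) by simp
  then show "a!k = c!k" if "k < length a" for k
    using that assms(1) by (auto simp: less_Suc_eq numeral_eq_Suc)
qed

definition opposite_edges :: "(nat \<Rightarrow> nat) \<Rightarrow> nat \<Rightarrow> nat \<Rightarrow> bool" where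
  "opposite_edges \<sigma> u v \<longleftrightarrow>
     (u = \<sigma> 0 \<and> v = \<sigma> 1) \<or> (u = \<sigma> 1 \<and> v = \<sigma> 0) \<or> (u = \<sigma> 2 \<and> v = \<sigma> 3) \<or> (u = \<sigma> 3 \<and> v = \<sigma> 2)"

definition opposite_edges_tuple :: "(nat \<Rightarrow> nat) \<Rightarrow> nat \<Rightarrow> nat list" where
  "opposite_edges_tuple \<sigma> r =
     map (\<lambda>(u, v). if opposite_edges \<sigma> u v then 0 else r) [(0,1), (0,2), (0,3), (1,2), (1,3), (2,3)]"

lemma permutes4_values:
  assumes "\<sigma> permutes {0..<(4::nat)}"
  shows "\<sigma> 0 \<noteq> \<sigma> 1" "\<sigma> 0 \<noteq> \<sigma> 2" "\<sigma> 0 \<noteq> \<sigma> 3" "\<sigma> 1 \<noteq> \<sigma> 2" "\<sigma> 1 \<noteq> \<sigma> 3" "\<sigma> 2 \<noteq> \<sigma> 3"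
    and "\<sigma> 0 < 4" "\<sigma> 1 < 4" "\<sigma> 2 < 4" "\<sigma> 3 < 4"
proof -
  have "inj_on \<sigma> {0..<4}"
    using assms by (rule permutes_inj_on)
  then show "\<sigma> 0 \<noteq> \<sigma> 1" "\<sigma> 0 \<noteq> \<sigma> 2" "\<sigma> 0 \<noteq> \<sigma> 3" "\<sigma> 1 \<noteq> \<sigma> 2" "\<sigma> 1 \<noteq> \<sigma> 3" "\<sigma> 2 \<noteq> \<sigma> 3"
    by (auto dest: inj_onD)
  show "\<sigma> 0 < 4" "\<sigma> 1 < 4" "\<sigma> 2 < 4" "\<sigma> 3 < 4"
    using permutes_in_image[OF assms] by auto
qed

lemma tet_cond_perm_opposite_edges:
  assumes "\<sigma> permutes {0..<(4::nat)}"
  shows "tet_cond \<sigma> [0, r, r, r, r, 0] m \<longleftrightarrow> tet_cond id (opposite_edges_tuple \<sigma> r) m"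
  using permutes4_values(1-6)[OF assms] permutes4_values(7-10)[OF assms, THEN less4_cases]
  by (elim disjE) (auto simp: opposite_edges_tuple_def opposite_edges_def tet_cond_def add.commute)

lemma special_opposite_edges_tuple:
  assumes "\<sigma> permutes {0..<(4::nat)}" "r > 0"
  shows "special_tuple (opposite_edges_tuple \<sigma> r)"
  using permutes4_values(1-6)[OF assms(1)] permutes4_values(7-10)[OF assms(1), THEN less4_cases] assms(2)
  by (elim disjE) (simp_all add: opposite_edges_tuple_def opposite_edges_def special_tuple_def)

lemma special_form_iff:
  assumes len: "length a = 6" and nontrivial: "\<not> trivial_curve a"
  shows "special_form (tet_ideal a :: 'k::field mpoly4 set) \<longleftrightarrow> special_tuple a"
proof
  assume "special_form (tet_ideal a :: 'k mpoly4 set)"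
  then obtain \<sigma> r where \<sigma>: "\<sigma> permutes {0..<4}"
    and eq: "(tet_ideal a :: 'k mpoly4 set) = perm_tet_ideal \<sigma> [0, r, r, r, r, 0]"
    unfolding special_form_def by blast
  have "tet_cond id a m \<longleftrightarrow> tet_cond id (opposite_edges_tuple \<sigma> r) m" for m
  proof -
    have "tet_cond id a m \<longleftrightarrow> (monom m :: 'k mpoly4) \<in> tet_ideal a"
      by (simp add: tet_ideal_eq)
    also have "\<dots> \<longleftrightarrow> tet_cond \<sigma> [0, r, r, r, r, 0] m"
      unfolding eq perm_tet_ideal_eq[OF permutes_inj_on[OF \<sigma>]] by simp
    finally show ?thesis
      unfolding tet_cond_perm_opposite_edges[OF \<sigma>] .
  qed
  then have a: "a = opposite_edges_tuple \<sigma> r"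
    by (intro tet_cond_inject) (simp_all add: len opposite_edges_tuple_def)
  have "r \<noteq> 0"
  proof
    assume "r = 0"
    then have "\<forall>k<6. a ! k = 0"
      unfolding a opposite_edges_tuple_def by (auto simp: less_Suc_eq numeral_eq_Suc)
    with nontrivial show False
      unfolding trivial_curve_def by blast
  qed
  then show "special_tuple a"
    unfolding a using \<sigma> by (simp add: special_opposite_edges_tuple)
next
  assume "special_tuple a"
  then obtain r where r: "a = [0,r,r,r,r,0] \<or> a = [r,0,r,r,0,r] \<or> a = [r,r,0,0,r,r]"
    unfolding special_tuple_def by blast
  have special: "special_form (tet_ideal a :: 'k mpoly4 set)"
    if \<sigma>: "\<sigma> permutes {0..<4}" and "opposite_edges_tuple \<sigma> r = a" for \<sigma>
  proof -
    have "(tet_ideal a :: 'k mpoly4 set) = perm_tet_ideal \<sigma> [0, r, r, r, r, 0]"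
      unfolding tet_ideal_eq perm_tet_ideal_eq[OF permutes_inj_on[OF \<sigma>]]
        tet_cond_perm_opposite_edges[OF \<sigma>] \<open>opposite_edges_tuple \<sigma> r = a\<close> ..
    then show ?thesis
      unfolding special_form_def using \<sigma> by blast
  qed
  from r show "special_form (tet_ideal a :: 'k mpoly4 set)"
  proof (elim disjE)
    assume "a = [0,r,r,r,r,0]"
    then show ?thesis
      by (intro special[of id]) (auto simp: opposite_edges_tuple_def opposite_edges_def)
  next
    assume "a = [r,0,r,r,0,r]"
    then show ?thesis
      by (intro special[of "transpose 1 2"])
        (auto simp: permutes_swap_id opposite_edges_tuple_def opposite_edges_def transpose_def)
  next
    assume "a = [r,r,0,0,r,r]"
    then show ?thesis
      by (intro special[of "transpose 1 3"])
        (auto simp: permutes_swap_id opposite_edges_tuple_def opposite_edges_def transpose_def)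
  qed
qed

theorem corollary5p8:
  fixes a :: "nat list" and X :: nat
    and N :: nat and r :: "nat \<Rightarrow> nat" and dg :: "nat \<Rightarrow> nat \<Rightarrow> int"
    and g :: "nat \<Rightarrow> 'k::field mpoly4" and M :: "nat \<Rightarrow> nat \<Rightarrow> nat \<Rightarrow> 'k mpoly4"
    and h :: "nat \<Rightarrow> 'k mpoly4"
  defines "J \<equiv> (tet_ideal a :: 'k mpoly4 set)"
    and "L \<equiv> (red_L X :: 'k mpoly4)"
    and "F \<equiv> (red_F X a :: 'k mpoly4)"
    and "I \<equiv> (tet_ideal (red_tuple X a) :: 'k mpoly4 set)"
    and "e \<equiv> tdeg (red_F X a :: 'k mpoly4)"
  assumes len: "length a = 6"
    and nontrivial: "\<not> trivial_curve a"
    and nonmin: "non_minimal a"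
    and facet: "X < 4"
    and applies: "reduction_applies X a"
    and maxweight: "\<forall>Y<4. facet_weight Y a \<le> facet_weight X a"
    and resI: "min_graded_free_res I N r dg g M"
    and lift_hom: "\<forall>j<r 0. homog (h j) (int e - dg 0 j)"
    and lift: "(\<Sum>j<r 0. g j * h j) = F"
  shows "min_graded_free_res J (cone_len N) (cone_rank r) (cone_deg r dg e)
           (cone_aug L F r g) (cone_mat L r h M)
         \<longleftrightarrow> \<not> special_form J"
proof -
  interpret double_link_cone I J N r dg g M L F e h
    using tet_double_link_cone[OF len facet applies] resI lift_hom lift
    unfolding I_def J_def L_def F_def e_def min_graded_free_res_def by blast
  have "min_graded_free_res J (cone_len N) (cone_rank r) (cone_deg r dg e) (cone_aug L F r g)
      (cone_mat L r h M) \<longleftrightarrow> (\<forall>k<r 0. in_max (h k))"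
    by (rule cone_min_graded_free_res_iff[OF resI]) (simp only: L_def red_L_eq in_max_var)
  also have "\<dots> \<longleftrightarrow> red_F_in_max_I X a"
    using resI lift unfolding I_def F_def by (rule tet_lift_in_max_iff)
  also have "\<dots> \<longleftrightarrow> \<not> special_tuple a"
    by (rule red_F_in_max_I_iff_not_special[OF len facet applies nontrivial maxweight])
  also have "\<dots> \<longleftrightarrow> \<not> special_form J"
    unfolding J_def by (simp add: special_form_iff[OF len nontrivial])
  finally show ?thesis .
qed

end
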